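(* Work in $\ell_1$ over $\mathbb{C}$ with sequences indexed by $\{0,1,2,\dots\}$ and standard basis $(e_k)$. Let $\xi$ be uniform on $\{-1,1\}$, and let $A$ be the diagonal operator $Ae_0=0$, $Ae_k=i\xi k\,e_k$ for $k\ge1$, so $e^{At}e_k=e^{i\xi kt}e_k$ and $\mathbb{E}e^{At}e_k=\cos(kt)e_k$. Let $\xi_1,\xi_2,\dots$ be i.i.d. copies of $\xi$ and $A_i$ defined as $A$ with $\xi_i$ in place of $\xi$. Then for every $T>0$ and every $n$ large enough (for every outcome $\omega$), $$\sup_{t\in[0,T]}\Big\|e^{A_1t/n}\cdots e^{A_nt/n}-\big(\mathbb{E}e^{At/n}\big)^n\Big\|_{\mathcal{L}(\ell_1)}\ge1;$$ in particular the law of large numbers fails in the operator norm topology for this sequence.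
   Context: $(\Omega,\mathcal{F},\Pr)$ is a probability space; $e^{Bt}=\sum_k t^kB^k/k!$ for bounded $B$ and, for diagonal $B$ with unbounded entries as here, $e^{Bt}$ is the diagonal operator with entries $e^{b_{kk}t}$; $\mathbb{E}$ of a random operator is the Pettis integral (entrywise expectation). *)

theory Defs
  imports "HOL-Probability.Probability"
begin

type_synonym seq = "nat \<Rightarrow> complex"
type_synonym op = "seq \<Rightarrow> seq"

definition l1norm :: "seq \<Rightarrow> real" where
  "l1norm x = (\<Sum>k. norm (x k))"

definition in_l1 :: "seq \<Rightarrow> bool" where
  "in_l1 x \<longleftrightarrow> summable (\<lambda>k. norm (x k))"

definition opnorm_l1 :: "op \<Rightarrow> real" where
  "opnorm_l1 B = Sup {l1norm (B x) | x. in_l1 x \<and> l1norm x \<le> 1}"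

definition basis :: "nat \<Rightarrow> seq" where
  "basis k = (\<lambda>j. if j = k then 1 else 0)"

text \<open>e^{Bt} for a diagonal B with diagonal entries b k.\<close>
definition expdiag :: "(nat \<Rightarrow> complex) \<Rightarrow> real \<Rightarrow> op" where
  "expdiag b t = (\<lambda>x k. exp (b k * complex_of_real t) * x k)"

definition Adiag :: "real \<Rightarrow> nat \<Rightarrow> complex" where
  "Adiag s k = (if k = 0 then 0 else \<i> * complex_of_real s * of_nat k)"

text \<open>Expectation of a random operator (entrywise, i.e. Pettis integral):
  the operator whose matrix entries are the expectations of the matrix entries.\<close>
definition expect_op :: "'a measure \<Rightarrow> ('a \<Rightarrow> op) \<Rightarrow> op" where
  "expect_op M B = (\<lambda>x j. \<Sum>k. (\<integral>\<omega>. B \<omega> (basis k) j \<partial>M) * x k)"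

fun prod_ops :: "(nat \<Rightarrow> op) \<Rightarrow> nat \<Rightarrow> op" where
  "prod_ops F 0 = id"
| "prod_ops F (Suc n) = prod_ops F n \<circ> F (Suc n)"

end

theory Submission
  imports Defs
begin

text \<open>All operators involved are diagonal in the standard basis, and the operator norm of a
  diagonal operator on \<open>\<ell>\<^sub>1\<close> is the supremum of the moduli of its entries. The \<open>k\<close>-th entry of
  the random product has modulus one, whereas the \<open>k\<close>-th entry of \<open>(\<bbbE> e\<^sup>A\<^sup>t\<^sup>/\<^sup>n)\<^sup>n\<close> is
  \<open>cos(kt/n)\<^sup>n\<close>. Given \<open>T\<close> and \<open>n\<close>, choose \<open>m\<close> with \<open>\<pi>/(2m) \<le> T\<close>: at \<open>t = \<pi>/(2m)\<close> and
  \<open>k = nm\<close> the cosine vanishes, so the difference has an entry of modulus one.\<close>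

definition diag_op :: "(nat \<Rightarrow> complex) \<Rightarrow> op" where
  "diag_op d = (\<lambda>x k. d k * x k)"

lemma expdiag_eq_diag_op: "expdiag b t = diag_op (\<lambda>k. exp (b k * complex_of_real t))"
  by (simp add: expdiag_def diag_op_def)

lemma prod_ops_diag_op:
  "prod_ops (\<lambda>i. diag_op (d i)) n = diag_op (\<lambda>k. \<Prod>i\<in>{1..n}. d i k)"
proof (induction n)
  case 0
  show ?case by (simp add: diag_op_def fun_eq_iff)
next
  case (Suc n)
  then show ?case
    by (simp add: diag_op_def fun_eq_iff prod.nat_ivl_Suc' mult.assoc)
qed

lemma funpow_diag_op: "diag_op d ^^ n = diag_op (\<lambda>k. d k ^ n)"
  by (induction n) (auto simp: diag_op_def fun_eq_iff mult.assoc)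

lemma diff_diag_op: "(\<lambda>x. diag_op d x - diag_op e x) = diag_op (\<lambda>k. d k - e k)"
  by (simp add: diag_op_def fun_eq_iff left_diff_distrib)

lemma expect_op_diag_op:
  "expect_op M (\<lambda>\<omega>. diag_op (d \<omega>)) = diag_op (\<lambda>k. \<integral>\<omega>. d \<omega> k \<partial>M)"
proof (intro ext)
  fix x j
  have "expect_op M (\<lambda>\<omega>. diag_op (d \<omega>)) x j
      = (\<Sum>k. if k = j then (\<integral>\<omega>. d \<omega> j \<partial>M) * x k else 0)"
    unfolding expect_op_def diag_op_def basis_def by (intro suminf_cong) auto
  also have "\<dots> = diag_op (\<lambda>k. \<integral>\<omega>. d \<omega> k \<partial>M) x j"
    using sums_single[of j "\<lambda>k. (\<integral>\<omega>. d \<omega> j \<partial>M) * x k"] by (simp add: sums_iff diag_op_def)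
  finally show "expect_op M (\<lambda>\<omega>. diag_op (d \<omega>)) x j = diag_op (\<lambda>k. \<integral>\<omega>. d \<omega> k \<partial>M) x j" .
qed

lemma l1norm_diag_op_basis: "l1norm (diag_op d (basis j)) = norm (d j)"
proof -
  have "(\<lambda>k. norm (diag_op d (basis j) k)) = (\<lambda>k. if k = j then norm (d j) else 0)"
    by (auto simp: diag_op_def basis_def)
  then show ?thesis
    unfolding l1norm_def using sums_single[of j "\<lambda>_. norm (d j)"] by (simp add: sums_iff)
qed

lemma in_l1_basis: "in_l1 (basis j)"
  and l1norm_basis: "l1norm (basis j) = 1"
proof -
  have "(\<lambda>k. norm (basis j k)) = (\<lambda>k. if k = j then 1 else 0)"
    by (auto simp: basis_def)
  then have "(\<lambda>k. norm (basis j k)) sums 1"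
    using sums_single[of j "\<lambda>_. 1::real"] by simp
  then show "in_l1 (basis j)" "l1norm (basis j) = 1"
    by (auto simp: in_l1_def l1norm_def sums_iff)
qed

lemma l1norm_diag_op_le:
  assumes d: "\<And>k. norm (d k) \<le> B" and x: "in_l1 x"
  shows "l1norm (diag_op d x) \<le> B * l1norm x"
proof -
  have x_summable: "summable (\<lambda>k. norm (x k))" using x by (simp add: in_l1_def)
  have le: "norm (d k * x k) \<le> B * norm (x k)" for k
    by (simp add: norm_mult mult_right_mono d)
  have "summable (\<lambda>k. norm (d k * x k))"
    by (rule summable_comparison_test[OF _ summable_mult[OF x_summable]]) (use le in auto)
  then have "l1norm (diag_op d x) \<le> (\<Sum>k. B * norm (x k))"
    unfolding l1norm_def diag_op_def by (rule suminf_le[OF le _ summable_mult[OF x_summable]])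
  also have "\<dots> = B * l1norm x"
    unfolding l1norm_def using suminf_mult[OF x_summable] by simp
  finally show ?thesis .
qed

lemma l1norm_diag_op_unit_ball_le:
  assumes d: "\<And>k. norm (d k) \<le> B" and x: "in_l1 x" "l1norm x \<le> 1"
  shows "l1norm (diag_op d x) \<le> B"
proof -
  have "B \<ge> 0" using d[of 0] norm_ge_zero[of "d 0"] by linarith
  then show ?thesis
    using l1norm_diag_op_le[of d B x, OF d x(1)] mult_left_le[OF x(2), of B] by linarith
qed

lemma opnorm_diag_op_ge:
  assumes d: "\<And>k. norm (d k) \<le> B"
  shows "norm (d j) \<le> opnorm_l1 (diag_op d)"
proof -
  let ?S = "{l1norm (diag_op d x) | x. in_l1 x \<and> l1norm x \<le> 1}"
  have "bdd_above ?S"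
    using l1norm_diag_op_unit_ball_le[of d B, OF d] unfolding bdd_above_def by blast
  moreover have "norm (d j) \<in> ?S"
    by (intro CollectI exI[of _ "basis j"]) (simp add: in_l1_basis l1norm_basis l1norm_diag_op_basis)
  ultimately show ?thesis
    unfolding opnorm_l1_def by (rule cSup_upper[rotated])
qed

lemma opnorm_diag_op_le:
  assumes d: "\<And>k. norm (d k) \<le> B"
  shows "opnorm_l1 (diag_op d) \<le> B"
proof -
  have "{l1norm (diag_op d x) | x. in_l1 x \<and> l1norm x \<le> 1} \<noteq> {}"
    using in_l1_basis l1norm_basis by fastforce
  then show ?thesis
    unfolding opnorm_l1_def using l1norm_diag_op_unit_ball_le[of d B, OF d] by (intro cSup_least) auto
qed

lemma norm_exp_Adiag: "norm (exp (Adiag s k * complex_of_real t)) = 1"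
  by (simp add: Adiag_def norm_exp_eq_Re)

lemma exp_Adiag_sign:
  assumes "\<sigma> \<in> {-1, 1}"
  shows "exp (Adiag \<sigma> k * complex_of_real s)
       = complex_of_real (cos (real k * s)) + \<i> * complex_of_real (sin (real k * s)) * complex_of_real \<sigma>"
proof -
  have "Adiag \<sigma> k * complex_of_real s = \<i> * complex_of_real (\<sigma> * (real k * s))"
    by (simp add: Adiag_def)
  then have "exp (Adiag \<sigma> k * complex_of_real s) = cis (\<sigma> * (real k * s))"
    by (simp only: cis_conv_exp)
  with assms show ?thesis
    by (auto simp: complex_eq_iff)
qed

lemma (in prob_space) expectation_symmetric_sign:
  fixes \<xi> :: "'a \<Rightarrow> real"
  assumes [measurable]: "\<xi> \<in> borel_measurable M"
    and sign: "\<forall>\<omega>\<in>space M. \<xi> \<omega> \<in> {-1, 1}"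
    and half: "prob {\<omega> \<in> space M. \<xi> \<omega> = 1} = 1/2"
  shows "expectation \<xi> = 0"
proof -
  define A where "A = {\<omega> \<in> space M. \<xi> \<omega> = 1}"
  have A: "A \<in> events" unfolding A_def by measurable
  have "expectation \<xi> = expectation (\<lambda>\<omega>. 2 * indicator A \<omega> - 1)"
    using sign by (intro Bochner_Integration.integral_cong) (auto simp: A_def indicator_def)
  also have "\<dots> = 2 * prob A - 1"
    using A by (subst Bochner_Integration.integral_diff)
      (auto simp: prob_space emeasure_space_1 less_top[symmetric] intro!: integrable_real_indicator)
  finally show ?thesis using half by (simp add: A_def)
qed

lemma (in prob_space) expectation_exp_Adiag:
  fixes \<xi> :: "'a \<Rightarrow> real"
  assumes [measurable]: "\<xi> \<in> borel_measurable M"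
    and sign: "\<forall>\<omega>\<in>space M. \<xi> \<omega> \<in> {-1, 1}"
    and half: "prob {\<omega> \<in> space M. \<xi> \<omega> = 1} = 1/2"
  shows "(\<integral>\<omega>. exp (Adiag (\<xi> \<omega>) k * complex_of_real s) \<partial>M) = complex_of_real (cos (real k * s))"
proof -
  have "integrable M \<xi>"
    using sign by (intro integrable_const_bound[of _ 1] AE_I2) auto
  then have "(\<integral>\<omega>. exp (Adiag (\<xi> \<omega>) k * complex_of_real s) \<partial>M)
      = complex_of_real (cos (real k * s)) + \<i> * complex_of_real (sin (real k * s)) * complex_of_real (expectation \<xi>)"
    using sign by (simp add: exp_Adiag_sign integral_complex_of_real prob_space cong: Bochner_Integration.integral_cong)
  then show ?thesis
    using expectation_symmetric_sign[OF assms] by simp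
qed

lemma norm_prod_exp_Adiag: "norm (\<Prod>i\<in>I. exp (Adiag (s i) k * complex_of_real t)) = 1"
  by (simp only: prod_norm[symmetric] norm_exp_Adiag prod.neutral_const)

lemma one_le_Sup_opnorm_prod_exp_Adiag_minus_cos_power:
  fixes s :: "nat \<Rightarrow> real"
  assumes n: "n \<ge> 1" and T: "T > 0"
  defines "D t \<equiv> diag_op (\<lambda>k. (\<Prod>i\<in>{1..n}. exp (Adiag (s i) k * complex_of_real (t / real n)))
                              - complex_of_real (cos (real k * (t / real n))) ^ n)"
  shows "1 \<le> Sup ((\<lambda>t. opnorm_l1 (D t)) ` {0..T})"
proof -
  obtain m :: nat where m: "m \<ge> 1" "pi / (2 * T) \<le> real m"
    by (meson real_arch_simple le_cases order.trans of_nat_le_iff order_refl one_le_numeral)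
  define t\<^sub>0 where "t\<^sub>0 = pi / (2 * real m)"
  have "t\<^sub>0 \<in> {0..T}"
    using m T by (auto simp: t\<^sub>0_def field_simps)
  have entry_bound: "norm ((\<Prod>i\<in>{1..n}. exp (Adiag (s i) k * complex_of_real (t / real n)))
                         - complex_of_real (cos (real k * (t / real n))) ^ n) \<le> 2" for t k
  proof -
    have "norm (complex_of_real (cos x) ^ n) \<le> 1" for x
      by (simp add: norm_power power_le_one abs_cos_le_one)
    then show ?thesis
      using norm_triangle_ineq4[of "\<Prod>i\<in>{1..n}. exp (Adiag (s i) k * complex_of_real (t / real n))"]
      by (simp only: norm_prod_exp_Adiag) (smt (verit))
  qed
  have "cos (real (n * m) * (t\<^sub>0 / real n)) = 0"
    using n m by (simp add: t\<^sub>0_def)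
  moreover have "(0::complex) ^ n = 0"
    using n by simp
  ultimately have entry_one: "norm ((\<Prod>i\<in>{1..n}. exp (Adiag (s i) (n * m) * complex_of_real (t\<^sub>0 / real n)))
               - complex_of_real (cos (real (n * m) * (t\<^sub>0 / real n))) ^ n) = 1"
    by (simp only: of_real_0 diff_zero norm_prod_exp_Adiag)
  have "norm ((\<Prod>i\<in>{1..n}. exp (Adiag (s i) (n * m) * complex_of_real (t\<^sub>0 / real n)))
               - complex_of_real (cos (real (n * m) * (t\<^sub>0 / real n))) ^ n) \<le> opnorm_l1 (D t\<^sub>0)"
    unfolding D_def by (rule opnorm_diag_op_ge[OF entry_bound])
  then have "1 \<le> opnorm_l1 (D t\<^sub>0)"
    unfolding entry_one .
  also have "\<dots> \<le> Sup ((\<lambda>t. opnorm_l1 (D t)) ` {0..T})"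
  proof (rule cSup_upper)
    show "opnorm_l1 (D t\<^sub>0) \<in> (\<lambda>t. opnorm_l1 (D t)) ` {0..T}"
      using \<open>t\<^sub>0 \<in> {0..T}\<close> by (rule imageI)
    show "bdd_above ((\<lambda>t. opnorm_l1 (D t)) ` {0..T})"
      unfolding D_def by (rule bdd_aboveI2[OF opnorm_diag_op_le[OF entry_bound]])
  qed
  finally show ?thesis .
qed

text \<open>The conclusion holds for every sign sequence.\<close>

theorem mainTheorem10:
  fixes M :: "'a measure" and \<xi> :: "'a \<Rightarrow> real" and \<xi>s :: "nat \<Rightarrow> 'a \<Rightarrow> real"
  assumes "prob_space M"
    and "\<xi> \<in> borel_measurable M"
    and "\<forall>\<omega>\<in>space M. \<xi> \<omega> \<in> {-1, 1}"
    and "measure M {\<omega> \<in> space M. \<xi> \<omega> = 1} = 1/2"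
    and "\<forall>i\<ge>1. \<xi>s i \<in> borel_measurable M"
    and "\<forall>i\<ge>1. \<forall>\<omega>\<in>space M. \<xi>s i \<omega> \<in> {-1, 1}"
    and "\<forall>i\<ge>1. measure M {\<omega> \<in> space M. \<xi>s i \<omega> = 1} = 1/2"
    and "prob_space.indep_vars M (\<lambda>_. borel) \<xi>s {1..}"
    and "T > 0"
  shows "\<exists>N. \<forall>n\<ge>N. \<forall>\<omega>\<in>space M.
           Sup ((\<lambda>t. opnorm_l1 (\<lambda>x. prod_ops (\<lambda>i. expdiag (Adiag (\<xi>s i \<omega>)) (t / real n)) n x
                  - ((expect_op M (\<lambda>\<omega>'. expdiag (Adiag (\<xi> \<omega>')) (t / real n))) ^^ n) x)) ` {0..T})
           \<ge> 1"
proof (intro exI[of _ 1] allI impI ballI)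
  interpret prob_space M by fact
  fix n :: nat and \<omega> assume "n \<ge> 1"
  have "expect_op M (\<lambda>\<omega>'. expdiag (Adiag (\<xi> \<omega>')) s)
      = diag_op (\<lambda>k. complex_of_real (cos (real k * s)))" for s
    unfolding expdiag_eq_diag_op expect_op_diag_op
    using expectation_exp_Adiag[OF assms(2-4)] by simp
  then show "1 \<le> Sup ((\<lambda>t. opnorm_l1 (\<lambda>x. prod_ops (\<lambda>i. expdiag (Adiag (\<xi>s i \<omega>)) (t / real n)) n x
                  - ((expect_op M (\<lambda>\<omega>'. expdiag (Adiag (\<xi> \<omega>')) (t / real n))) ^^ n) x)) ` {0..T})"
    using one_le_Sup_opnorm_prod_exp_Adiag_minus_cos_power[OF \<open>n \<ge> 1\<close> \<open>T > 0\<close>, of "\<lambda>i. \<xi>s i \<omega>"]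
    by (simp only: expdiag_eq_diag_op prod_ops_diag_op funpow_diag_op diff_diag_op)
qed

end
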